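(* Let $P$ be a partial order on a finite set $V$. If $A$ is an antichain of $P$, then $e(P)\ge\sum_{v\in A}e(P\setminus v)$. If $S$ is a cutset of $P$, then $e(P)\le\sum_{v\in S}e(P\setminus v)$. Moreover, if $I\subseteq V$ is either a cutset or an antichain of $P$, then $e(P)=\sum_{v\in I}e(P\setminus v)$ if and only if $I$ is both a cutset and an antichain of $P$.
   Context: $e(Q)$ denotes the number of linear extensions of a finite poset $Q$, where a linear extension of a poset on an $m$-element set is an order-preserving bijection onto $[m]$ (strict order goes to strict order); the empty poset has one linear extension. $P\setminus v$ denotes the subposet of $P$ induced on $V\setminus\{v\}$. A cutset of $P$ is a subset of $V$ that intersects every maximal chain of $P$. *)

theory Defs
  imports Main "HOL-Library.FuncSet"
begin

definition linext :: "'a set \<Rightarrow> 'a rel \<Rightarrow> ('a \<Rightarrow> nat) set" where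
  "linext V r = {f \<in> V \<rightarrow>\<^sub>E {1..card V}. bij_betw f V {1..card V} \<and>
      (\<forall>x\<in>V. \<forall>y\<in>V. (x, y) \<in> r \<and> x \<noteq> y \<longrightarrow> f x < f y)}"

definition num_linext :: "'a set \<Rightarrow> 'a rel \<Rightarrow> nat" where
  "num_linext V r = card (linext V r)"

definition del_pt :: "'a rel \<Rightarrow> 'a set \<Rightarrow> 'a \<Rightarrow> 'a rel" where
  "del_pt r V v = Restr r (V - {v})"

definition is_chain :: "'a set \<Rightarrow> 'a rel \<Rightarrow> 'a set \<Rightarrow> bool" where
  "is_chain V r C \<longleftrightarrow> C \<subseteq> V \<and> (\<forall>x\<in>C. \<forall>y\<in>C. (x, y) \<in> r \<or> (y, x) \<in> r)"

definition is_maximal_chain :: "'a set \<Rightarrow> 'a rel \<Rightarrow> 'a set \<Rightarrow> bool" where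
  "is_maximal_chain V r C \<longleftrightarrow> is_chain V r C \<and>
     (\<forall>D. is_chain V r D \<and> C \<subseteq> D \<longrightarrow> D = C)"

definition is_antichain :: "'a set \<Rightarrow> 'a rel \<Rightarrow> 'a set \<Rightarrow> bool" where
  "is_antichain V r A \<longleftrightarrow> A \<subseteq> V \<and>
     (\<forall>x\<in>A. \<forall>y\<in>A. x \<noteq> y \<longrightarrow> (x, y) \<notin> r)"

definition is_cutset :: "'a set \<Rightarrow> 'a rel \<Rightarrow> 'a set \<Rightarrow> bool" where
  "is_cutset V r S \<longleftrightarrow> S \<subseteq> V \<and>
     (\<forall>C. is_maximal_chain V r C \<longrightarrow> S \<inter> C \<noteq> {})"

end

theory Submission
  imports Defs
begin

(* Write e(W) for the number of linear extensions of the subposet induced on W.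
   Listing a linear extension starts with a minimal element, which gives the recursion
   e(W) = sum of e(W - m) over the minimal elements m of W.

   The theorem follows from a single comparison principle (del_sum_dominated): for an
   antichain A and a set B such that every maximal chain meeting A also meets B,
     sum_{a in A} e(W - a)  <=  sum_{b in B} e(W - b),
   strictly if some maximal chain misses A but meets B, or meets B twice.  It is proved
   by induction on W: applying the recursion to every term, both sides decompose over
   the minimal element x deleted first, and after deleting x the sets A and B are
   replaced by their residuals (x is replaced by the elements that become minimal), which
   again satisfy the hypotheses.  The set of minimal elements is an antichain met by every
   maximal chain and its sum is e(W) by the recursion; comparing an antichain with it, and
   it with a cutset, yields the two inequalities and the characterisation of equality. *)

definition minimals :: "'a set \<Rightarrow> 'a rel \<Rightarrow> 'a set" where
  "minimals W r = {m \<in> W. \<forall>y\<in>W. (y, m) \<in> r \<longrightarrow> y = m}"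

lemma finite_linext: "finite W \<Longrightarrow> finite (linext W r)"
  unfolding linext_def by (rule finite_subset[of _ "W \<rightarrow>\<^sub>E {1..card W}"]) (auto intro: finite_PiE)

lemma linextI:
  assumes "f \<in> W \<rightarrow>\<^sub>E {1..card W}" "bij_betw f W {1..card W}"
    and "\<And>x y. x \<in> W \<Longrightarrow> y \<in> W \<Longrightarrow> (x, y) \<in> r \<Longrightarrow> x \<noteq> y \<Longrightarrow> f x < f y"
  shows "f \<in> linext W r"
  using assms by (simp add: linext_def)

lemma linextD:
  assumes "f \<in> linext W r"
  shows "f \<in> W \<rightarrow>\<^sub>E {1..card W}" "bij_betw f W {1..card W}"
    and "\<And>x y. x \<in> W \<Longrightarrow> y \<in> W \<Longrightarrow> (x, y) \<in> r \<Longrightarrow> x \<noteq> y \<Longrightarrow> f x < f y"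
  using assms by (auto simp: linext_def)

lemma num_linext_empty: "num_linext {} r = 1"
  unfolding num_linext_def linext_def by (simp add: bij_betw_def)

lemma linext_Restr: "linext W (Restr r W) = linext W r"
  unfolding linext_def by auto

lemma bij_betw_onto_card:
  assumes "inj_on f A" "f \<in> A \<rightarrow> {1..card A}"
  shows "bij_betw f A {1..card A}"
proof (rule bij_betw_imageI[OF assms(1)])
  have "f ` A \<subseteq> {1..card A}" using assms(2) by auto
  moreover have "card (f ` A) = card {1..card A}" using assms(1) by (simp add: card_image)
  ultimately show "f ` A = {1..card A}" by (metis card_subset_eq finite_atLeastAtMost)
qed

lemma linext_values_above_first:
  assumes f: "f \<in> linext W r" and m: "m \<in> W" "f m = 1" and x: "x \<in> W - {m}"
  shows "2 \<le> f x \<and> f x \<le> card W"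
proof -
  have "f x \<in> {1..card W}" using linextD(1)[OF f] x by auto
  moreover have "f x \<noteq> f m"
    using linextD(2)[OF f] m x by (auto simp: bij_betw_def inj_on_def)
  ultimately show ?thesis using m by auto
qed

lemma linext_drop_first:
  assumes fin: "finite W" and f: "f \<in> linext W r" and m: "m \<in> W" "f m = 1"
  shows "(\<lambda>x. if x \<in> W - {m} then f x - 1 else undefined) \<in> linext (W - {m}) r"
    (is "?g \<in> _")
proof -
  note big = linext_values_above_first[OF f m]
  have card: "card (W - {m}) = card W - 1" using fin m by simp
  have ext: "?g \<in> (W - {m}) \<rightarrow>\<^sub>E {1..card (W - {m})}"
  proof (rule PiE_I)
    fix x assume "x \<in> W - {m}"
    thus "?g x \<in> {1..card (W - {m})}" using big[of x] card by auto
  qed auto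
  have "inj_on ?g (W - {m})"
  proof (rule inj_onI)
    fix x y assume xy: "x \<in> W - {m}" "y \<in> W - {m}" "?g x = ?g y"
    hence "f x = f y" using big[of x] big[of y] by auto
    thus "x = y" using inj_onD[OF bij_betw_imp_inj_on[OF linextD(2)[OF f]]] xy by blast
  qed
  hence bij: "bij_betw ?g (W - {m}) {1..card (W - {m})}"
    using ext by (intro bij_betw_onto_card) auto
  moreover have "?g x < ?g y"
    if "x \<in> W - {m}" "y \<in> W - {m}" "(x, y) \<in> r" "x \<noteq> y" for x y
  proof -
    have "f x < f y" using linextD(3)[OF f] that by blast
    moreover have "2 \<le> f x" using that big[of x] by simp
    ultimately show ?thesis using that by simp
  qed
  ultimately show ?thesis using ext by (intro linextI)
qed

lemma linext_add_first:
  assumes fin: "finite W" and m: "m \<in> minimals W r" and g: "g \<in> linext (W - {m}) r"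
  shows "(\<lambda>x. if x = m then 1 else if x \<in> W - {m} then g x + 1 else undefined) \<in> linext W r"
    (is "?f \<in> _")
proof -
  have mW: "m \<in> W" using m by (simp add: minimals_def)
  have card: "card (W - {m}) = card W - 1" using fin mW by simp
  have g_range: "1 \<le> g x \<and> g x \<le> card W - 1" if "x \<in> W - {m}" for x
    using PiE_mem[OF linextD(1)[OF g] that] card by simp
  have ext: "?f \<in> W \<rightarrow>\<^sub>E {1..card W}"
  proof (rule PiE_I)
    fix x assume "x \<in> W"
    moreover have "1 \<le> card W" using fin mW by (metis One_nat_def Suc_leI card_gt_0_iff empty_iff)
    ultimately show "?f x \<in> {1..card W}" using g_range[of x] by auto
  qed (use mW in auto)
  have f_other: "?f x = g x + 1" "2 \<le> ?f x" if "x \<in> W - {m}" for x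
    using that g_range[OF that] by auto
  have "inj_on ?f W"
  proof (rule inj_onI)
    fix x y assume xy: "x \<in> W" "y \<in> W" "?f x = ?f y"
    consider "x = m" "y = m" | "x \<in> W - {m}" "y \<in> W - {m}"
      | "x \<in> W - {m}" "y = m" | "x = m" "y \<in> W - {m}" using xy by blast
    thus "x = y"
    proof cases
      case 2
      hence "g x = g y" using xy f_other by simp
      thus ?thesis using inj_onD[OF bij_betw_imp_inj_on[OF linextD(2)[OF g]]] 2 by blast
    qed (use xy f_other in fastforce)+
  qed
  hence bij: "bij_betw ?f W {1..card W}"
    using ext by (intro bij_betw_onto_card) auto
  have "?f x < ?f y" if "x \<in> W" "y \<in> W" "(x, y) \<in> r" "x \<noteq> y" for x y
  proof -
    have y: "y \<in> W - {m}" using m that by (auto simp: minimals_def)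
    show ?thesis
    proof (cases "x = m")
      case False
      hence "g x < g y" using linextD(3)[OF g] that y by blast
      thus ?thesis using f_other y False that by simp
    qed (use f_other[OF y] in simp)
  qed
  thus ?thesis using ext bij by (intro linextI)
qed

lemma card_linext_first:
  assumes fin: "finite W" and m: "m \<in> minimals W r"
  shows "card {f \<in> linext W r. f m = 1} = num_linext (W - {m}) r"
proof -
  define drop where "drop f x = (if x \<in> W - {m} then f x - 1 else undefined)"
    for f :: "'a \<Rightarrow> nat" and x
  define add where "add g x = (if x = m then 1 else if x \<in> W - {m} then g x + 1 else undefined)"
    for g :: "'a \<Rightarrow> nat" and x
  have mW: "m \<in> W" using m by (simp add: minimals_def)
  have "bij_betw drop {f \<in> linext W r. f m = 1} (linext (W - {m}) r)"
  proof (rule bij_betw_byWitness[where f' = add])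
    show "\<forall>f\<in>{f \<in> linext W r. f m = 1}. add (drop f) = f"
    proof
      fix f assume "f \<in> {f \<in> linext W r. f m = 1}"
      hence f: "f \<in> linext W r" "f m = 1" by auto
      have "add (drop f) x = f x" for x
      proof (cases "x \<in> W - {m}")
        case True
        thus ?thesis using linext_values_above_first[OF f(1) mW f(2) True]
          by (simp add: add_def drop_def)
      next
        case False
        thus ?thesis using f PiE_arb[OF linextD(1)[OF f(1)]] by (auto simp: add_def drop_def)
      qed
      thus "add (drop f) = f" ..
    qed
    show "\<forall>g\<in>linext (W - {m}) r. drop (add g) = g"
    proof
      fix g assume "g \<in> linext (W - {m}) r"
      hence gW: "g \<in> (W - {m}) \<rightarrow>\<^sub>E {1..card (W - {m})}" by (rule linextD)
      have "drop (add g) x = g x" for x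
        using PiE_arb[OF gW, of x] by (simp add: add_def drop_def)
      thus "drop (add g) = g" ..
    qed
    show "drop ` {f \<in> linext W r. f m = 1} \<subseteq> linext (W - {m}) r"
      using linext_drop_first[OF fin _ mW] unfolding drop_def by auto
    show "add ` linext (W - {m}) r \<subseteq> {f \<in> linext W r. f m = 1}"
      using linext_add_first[OF fin m] unfolding add_def by auto
  qed
  thus ?thesis unfolding num_linext_def by (rule bij_betw_same_card)
qed

text \<open>The basic recursion: a linear extension starts with some minimal element, so
  \<open>e(W) = \<Sum>\<^sub>m e(W - m)\<close> over the minimal elements \<open>m\<close> of a finite nonempty \<open>W\<close>.\<close>
lemma num_linext_rec:
  assumes fin: "finite W" and ne: "W \<noteq> {}"
  shows "num_linext W r = (\<Sum>m\<in>minimals W r. num_linext (W - {m}) r)"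
proof -
  have "linext W r = (\<Union>m\<in>minimals W r. {f \<in> linext W r. f m = 1})"
  proof (rule set_eqI, rule iffI)
    fix f assume f: "f \<in> linext W r"
    have "1 \<in> {1..card W}" using fin ne by (simp add: Suc_leI card_gt_0_iff)
    then obtain m where m: "m \<in> W" "f m = 1"
      using linextD(2)[OF f] by (metis bij_betw_iff_bijections)
    have "y = m" if "y \<in> W" "(y, m) \<in> r" for y
    proof (rule ccontr)
      assume "y \<noteq> m"
      hence "f y < f m" using linextD(3)[OF f] that m(1) by blast
      moreover have "f y \<in> {1..card W}" using PiE_mem[OF linextD(1)[OF f] that(1)] .
      ultimately show False using m by auto
    qed
    hence "m \<in> minimals W r" using m by (auto simp: minimals_def)
    thus "f \<in> (\<Union>m\<in>minimals W r. {f \<in> linext W r. f m = 1})" using f m by auto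
  qed auto
  hence "num_linext W r = card (\<Union>m\<in>minimals W r. {f \<in> linext W r. f m = 1})"
    by (simp add: num_linext_def)
  also have "\<dots> = (\<Sum>m\<in>minimals W r. card {f \<in> linext W r. f m = 1})"
  proof (rule card_UN_disjoint)
    show "finite (minimals W r)" using fin by (simp add: minimals_def)
    show "\<forall>m\<in>minimals W r. finite {f \<in> linext W r. f m = 1}"
      using finite_linext[OF fin] by auto
    show "\<forall>i\<in>minimals W r. \<forall>j\<in>minimals W r. i \<noteq> j \<longrightarrow>
        {f \<in> linext W r. f i = 1} \<inter> {f \<in> linext W r. f j = 1} = {}"
      using inj_onD[OF bij_betw_imp_inj_on[OF linextD(2)]] by (fastforce simp: minimals_def)
  qed
  also have "\<dots> = (\<Sum>m\<in>minimals W r. num_linext (W - {m}) r)"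
    using card_linext_first[OF fin] by simp
  finally show ?thesis .
qed

locale finite_poset =
  fixes V :: "'a set" and r :: "'a rel"
  assumes finite_carrier: "finite V" and partial_order: "partial_order_on V r"
begin

lemma po_carrier: "(x, y) \<in> r \<Longrightarrow> x \<in> V \<and> y \<in> V"
  using partial_order_onD(4)[OF partial_order] by auto

lemma po_refl: "x \<in> V \<Longrightarrow> (x, x) \<in> r"
  using partial_order_onD(1)[OF partial_order] by (auto simp: refl_on_def)

lemma po_trans: "(x, y) \<in> r \<Longrightarrow> (y, z) \<in> r \<Longrightarrow> (x, z) \<in> r"
  using partial_order_onD(2)[OF partial_order] by (auto dest: transD)

lemma po_antisym: "(x, y) \<in> r \<Longrightarrow> (y, x) \<in> r \<Longrightarrow> x = y"
  using partial_order_onD(3)[OF partial_order] by (auto dest: antisymD)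

lemma finite_subposet: assumes "W \<subseteq> V" shows "finite W"
  using assms finite_carrier by (rule finite_subset)

lemma minimal_below:
  assumes WV: "W \<subseteq> V" and w: "w \<in> W"
  shows "\<exists>m\<in>minimals W r. (m, w) \<in> r"
proof -
  define down where "down z = {y \<in> W. (y, z) \<in> r}" for z
  have "(m, w) \<in> r \<Longrightarrow> m \<in> W \<Longrightarrow> \<exists>m'\<in>minimals W r. (m', w) \<in> r" for m
  proof (induction "card (down m)" arbitrary: m rule: less_induct)
    case less
    show ?case
    proof (cases "m \<in> minimals W r")
      case False
      then obtain z where z: "z \<in> W" "(z, m) \<in> r" "z \<noteq> m"
        using less.prems by (auto simp: minimals_def)
      have "down z \<subseteq> down m" using z po_trans by (auto simp: down_def)
      moreover have "m \<in> down m - down z"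
        using less.prems z po_antisym WV po_refl by (auto simp: down_def)
      ultimately have "card (down z) < card (down m)"
        using finite_subposet[OF WV] by (intro psubset_card_mono) (auto simp: down_def)
      thus ?thesis using less.hyps z less.prems po_trans by blast
    qed (use less.prems in blast)
  qed
  thus ?thesis using w WV po_refl by blast
qed

lemma num_linext_pos: "W \<subseteq> V \<Longrightarrow> 1 \<le> num_linext W r"
proof (induction "card W" arbitrary: W rule: less_induct)
  case less
  show ?case
  proof (cases "W = {}")
    case False
    then obtain m where m: "m \<in> minimals W r" using minimal_below less.prems by blast
    have finW: "finite W" using less.prems by (rule finite_subposet)
    have mW: "m \<in> W" using m by (simp add: minimals_def)
    have "1 \<le> num_linext (W - {m}) r"
      using less.prems card_Diff1_less[OF finW mW] by (intro less.hyps) auto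
    also have "\<dots> \<le> (\<Sum>m\<in>minimals W r. num_linext (W - {m}) r)"
      using m finW by (intro member_le_sum) (auto simp: minimals_def)
    finally show ?thesis using num_linext_rec[OF finW False] by simp
  qed (simp add: num_linext_empty)
qed

definition del_sum :: "'a set \<Rightarrow> 'a set \<Rightarrow> nat" where
  "del_sum W X = (\<Sum>x\<in>X. num_linext (W - {x}) r)"

definition new_minimals :: "'a set \<Rightarrow> 'a \<Rightarrow> 'a set" where
  "new_minimals W x = minimals (W - {x}) r - minimals W r"

lemma minimals_Diff: "minimals (W - {x}) r = (minimals W r - {x}) \<union> new_minimals W x"
  unfolding new_minimals_def minimals_def by auto

lemma new_minimalsD:
  "n \<in> new_minimals W x \<Longrightarrow> (x, n) \<in> r \<and> n \<noteq> x \<and> n \<in> W - {x} \<and> n \<in> minimals (W - {x}) r"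
  unfolding new_minimals_def minimals_def by auto

lemma finite_new_minimals: "W \<subseteq> V \<Longrightarrow> finite (new_minimals W x)"
  using finite_subposet by (auto simp: new_minimals_def minimals_def)

lemma new_minimals_nonminimal:
  assumes "x \<notin> minimals W r"
  shows "new_minimals W x = {}"
proof (rule ccontr)
  assume "new_minimals W x \<noteq> {}"
  then obtain n where n: "n \<in> minimals (W - {x}) r" "n \<notin> minimals W r"
    by (auto simp: new_minimals_def)
  then obtain z where z: "z \<in> W" "(z, n) \<in> r" "z \<noteq> n" by (auto simp: minimals_def)
  hence "z = x" using n by (auto simp: minimals_def)
  then obtain w where w: "w \<in> W" "(w, x) \<in> r" "w \<noteq> x" using assms z by (auto simp: minimals_def)
  have "(w, n) \<in> r" "w \<noteq> n" using w z \<open>z = x\<close> po_trans po_antisym by blast+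
  thus False using n w by (auto simp: minimals_def)
qed

text \<open>The part of \<open>del_sum W X\<close> in which the minimal element \<open>m\<close> is deleted first.\<close>
definition del_sum_at :: "'a set \<Rightarrow> 'a set \<Rightarrow> 'a \<Rightarrow> nat" where
  "del_sum_at W X m = del_sum (W - {m}) (X - {m})
     + (if m \<in> X then del_sum (W - {m}) (new_minimals W m) else 0)"

text \<open>Applying the basic recursion to every term of \<open>del_sum W X\<close> and regrouping by the
  minimal element deleted first.  Deleting \<open>x\<close> and then \<open>m\<close> is counted under \<open>m\<close> if \<open>m\<close>
  was minimal in \<open>W\<close>, and otherwise \<open>m\<close> is a new minimal element of \<open>W - x\<close>.\<close>
lemma del_sum_decomp:
  assumes WV: "W \<subseteq> V" and two: "2 \<le> card W" and XW: "X \<subseteq> W"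
  shows "del_sum W X = (\<Sum>m\<in>minimals W r. del_sum_at W X m)"
proof -
  have finW: "finite W" and finX: "finite X" and finM: "finite (minimals W r)"
    using WV XW finite_subposet by (auto simp: minimals_def intro: finite_subset)
  have ne: "W - {x} \<noteq> {}" for x
  proof
    assume "W - {x} = {}"
    hence "card W \<le> card {x}" by (intro card_mono) auto
    thus False using two by simp
  qed
  have "del_sum W X = (\<Sum>x\<in>X. \<Sum>m\<in>minimals (W - {x}) r. num_linext (W - {x} - {m}) r)"
    unfolding del_sum_def using finW ne by (intro sum.cong num_linext_rec) auto
  also have "\<dots> = (\<Sum>x\<in>X. (\<Sum>m\<in>minimals W r - {x}. num_linext (W - {x} - {m}) r)
                          + del_sum (W - {x}) (new_minimals W x))"
    unfolding minimals_Diff del_sum_def using finM finite_new_minimals[OF WV]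
    by (intro sum.cong refl sum.union_disjoint) (auto simp: new_minimals_def)
  also have "\<dots> = (\<Sum>m\<in>minimals W r. del_sum (W - {m}) (X - {m}))
                 + (\<Sum>x\<in>X. del_sum (W - {x}) (new_minimals W x))"
  proof -
    have "(\<Sum>x\<in>X. \<Sum>m\<in>minimals W r - {x}. num_linext (W - {x} - {m}) r)
        = (\<Sum>x\<in>X. \<Sum>m\<in>{m \<in> minimals W r. m \<noteq> x}. num_linext (W - {x} - {m}) r)"
      by (intro sum.cong) auto
    also have "\<dots> = (\<Sum>m\<in>minimals W r. \<Sum>x\<in>{x \<in> X. m \<noteq> x}. num_linext (W - {x} - {m}) r)"
      by (rule sum.swap_restrict[OF finX finM])
    also have "\<dots> = (\<Sum>m\<in>minimals W r. del_sum (W - {m}) (X - {m}))"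
      unfolding del_sum_def by (intro sum.cong) (auto simp: Diff_insert2[symmetric] insert_commute)
    finally show ?thesis by (simp add: sum.distrib)
  qed
  also have "(\<Sum>x\<in>X. del_sum (W - {x}) (new_minimals W x))
      = (\<Sum>m\<in>minimals W r. if m \<in> X then del_sum (W - {m}) (new_minimals W m) else 0)"
  proof -
    have "(\<Sum>x\<in>X. del_sum (W - {x}) (new_minimals W x))
        = (\<Sum>x\<in>X \<inter> minimals W r. del_sum (W - {x}) (new_minimals W x))"
      using new_minimals_nonminimal by (intro sum.mono_neutral_right[OF finX]) (auto simp: del_sum_def)
    thus ?thesis using finM by (simp add: sum.If_cases Int_commute)
  qed
  finally show ?thesis by (simp add: sum.distrib del_sum_at_def)
qed

lemma is_chain_insert:
  assumes "is_chain W r C" "W \<subseteq> V" "z \<in> W" "\<forall>y\<in>C. (z, y) \<in> r \<or> (y, z) \<in> r"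
  shows "is_chain W r (insert z C)"
  using assms po_refl by (auto simp: is_chain_def)

lemma is_maximal_chainI:
  "is_chain W r C \<Longrightarrow> (\<And>E. is_chain W r E \<Longrightarrow> C \<subseteq> E \<Longrightarrow> E = C) \<Longrightarrow> is_maximal_chain W r C"
  by (auto simp: is_maximal_chain_def)

lemma maximal_chain_eq: "is_maximal_chain W r C \<Longrightarrow> is_chain W r E \<Longrightarrow> C \<subseteq> E \<Longrightarrow> E = C"
  by (simp add: is_maximal_chain_def)

lemma maximal_chain_chain: "is_maximal_chain W r C \<Longrightarrow> is_chain W r C"
  by (simp add: is_maximal_chain_def)

lemma maximal_chain_subset: "is_maximal_chain W r C \<Longrightarrow> C \<subseteq> W"
  by (simp add: is_maximal_chain_def is_chain_def)

lemma chain_has_least: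
  assumes "finite C" "C \<noteq> {}" "is_chain W r C"
  shows "\<exists>c\<in>C. \<forall>y\<in>C. (c, y) \<in> r"
  using assms
proof (induction C rule: finite_ne_induct)
  case (insert x F)
  then obtain c where c: "c \<in> F" "\<forall>y\<in>F. (c, y) \<in> r"
    by (auto simp: is_chain_def)
  have "(x, c) \<in> r \<or> (c, x) \<in> r" "(x, x) \<in> r"
    using insert.prems c by (auto simp: is_chain_def)
  thus ?case using c po_trans by blast
qed (auto simp: is_chain_def)

lemma maximal_chain_least_minimal:
  assumes WV: "W \<subseteq> V" and C: "is_maximal_chain W r C"
    and c: "c \<in> C" "\<forall>y\<in>C. (c, y) \<in> r"
  shows "c \<in> minimals W r"
proof -
  have "z = c" if z: "z \<in> W" "(z, c) \<in> r" for z
  proof -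
    have "is_chain W r C" using C by (rule maximal_chain_chain)
    hence "is_chain W r (insert z C)"
      by (rule is_chain_insert[OF _ WV z(1)]) (use c z po_trans in blast)
    hence "z \<in> C" using maximal_chain_eq[OF C] by blast
    thus "z = c" using c z po_antisym by blast
  qed
  thus ?thesis using c maximal_chain_subset[OF C] by (auto simp: minimals_def)
qed

lemma maximal_chain_least:
  assumes WV: "W \<subseteq> V" and ne: "W \<noteq> {}" and C: "is_maximal_chain W r C"
  shows "\<exists>c\<in>C. (\<forall>y\<in>C. (c, y) \<in> r) \<and> c \<in> minimals W r"
proof -
  have "C \<noteq> {}"
  proof
    assume "C = {}"
    obtain w where "w \<in> W" using ne by auto
    hence "is_chain W r {w}" using WV po_refl by (auto simp: is_chain_def)
    thus False using maximal_chain_eq[OF C] \<open>C = {}\<close> by blast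
  qed
  moreover have "finite C"
    using maximal_chain_subset[OF C] finite_subposet[OF WV] by (rule finite_subset)
  moreover have "is_chain W r C" using C by (rule maximal_chain_chain)
  ultimately obtain c where "c \<in> C" "\<forall>y\<in>C. (c, y) \<in> r"
    using chain_has_least by blast
  thus ?thesis using maximal_chain_least_minimal[OF WV C] by blast
qed

text \<open>Every chain extends to a maximal chain (take a chain of maximal size above it).\<close>
lemma chain_extends_maximal:
  assumes WV: "W \<subseteq> V" and D: "is_chain W r D"
  shows "\<exists>C. is_maximal_chain W r C \<and> D \<subseteq> C"
proof -
  define F where "F = {E. is_chain W r E \<and> D \<subseteq> E}"
  have finW: "finite W" using WV by (rule finite_subposet)
  have "F \<subseteq> Pow W" by (auto simp: F_def is_chain_def)
  hence finF: "finite F" using finW finite_subset by blast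
  have "D \<in> F" using D by (simp add: F_def)
  hence "Max (card ` F) \<in> card ` F" using finF by (intro Max_in) auto
  then obtain E where E: "E \<in> F" "card E = Max (card ` F)" by (metis imageE)
  hence E_max: "\<forall>E'\<in>F. card E' \<le> card E" using finF by simp
  have "is_maximal_chain W r E"
  proof (rule is_maximal_chainI)
    show "is_chain W r E" using E by (simp add: F_def)
    fix E' assume E': "is_chain W r E'" "E \<subseteq> E'"
    hence "card E' \<le> card E" using E E_max by (auto simp: F_def)
    moreover have "finite E'"
      using E' finW by (auto simp: is_chain_def intro: finite_subset)
    ultimately show "E' = E" using E'(2) card_seteq by blast
  qed
  thus ?thesis using E by (auto simp: F_def)
qed

lemma maximal_chain_delete_outside:
  assumes C: "is_maximal_chain W r C" and x: "x \<notin> C"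
  shows "is_maximal_chain (W - {x}) r C"
proof (rule is_maximal_chainI)
  show "is_chain (W - {x}) r C" using maximal_chain_chain[OF C] x by (auto simp: is_chain_def)
  fix E assume E: "is_chain (W - {x}) r E" "C \<subseteq> E"
  have "is_chain W r E" using E(1) by (auto simp: is_chain_def)
  thus "E = C" using maximal_chain_eq[OF C] E(2) by blast
qed

lemma maximal_chain_delete_bottom:
  assumes WV: "W \<subseteq> V" and M: "minimals W r = {c}" and C: "is_maximal_chain W r C"
    and cC: "c \<in> C"
  shows "is_maximal_chain (W - {c}) r (C - {c})"
proof (rule is_maximal_chainI)
  have cw: "(c, w) \<in> r" if "w \<in> W" for w using minimal_below[OF WV that] M by auto
  have cW: "c \<in> W" using M by (auto simp: minimals_def)
  show "is_chain (W - {c}) r (C - {c})"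
    using maximal_chain_chain[OF C] by (auto simp: is_chain_def)
  fix E assume E: "is_chain (W - {c}) r E" "C - {c} \<subseteq> E"
  have EW: "E \<subseteq> W - {c}" using E(1) by (simp add: is_chain_def)
  have "is_chain W r E" using E(1) by (auto simp: is_chain_def)
  hence "is_chain W r (insert c E)" by (rule is_chain_insert[OF _ WV cW]) (use cw EW in blast)
  hence "insert c E = C" using E(2) maximal_chain_eq[OF C] by blast
  thus "E = C - {c}" using EW by blast
qed

lemma maximal_chain_lift:
  assumes WV: "W \<subseteq> V" and x: "x \<in> minimals W r" and D: "is_maximal_chain (W - {x}) r D"
    and d: "d \<in> D" "\<forall>y\<in>D. (d, y) \<in> r"
  shows "(d \<in> minimals W r \<and> is_maximal_chain W r D)
       \<or> (d \<in> new_minimals W x \<and> is_maximal_chain W r (insert x D))"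
proof -
  have dm: "d \<in> minimals (W - {x}) r"
    using WV D d by (intro maximal_chain_least_minimal) auto
  have chD: "is_chain (W - {x}) r D" using D by (rule maximal_chain_chain)
  hence chDW: "is_chain W r D" by (auto simp: is_chain_def)
  have xW: "x \<in> W" using x by (simp add: minimals_def)
  show ?thesis
  proof (cases "d \<in> minimals W r")
    case True
    have "is_maximal_chain W r D"
    proof (rule is_maximal_chainI)
      show "is_chain W r D" by (rule chDW)
      fix E assume E: "is_chain W r E" "D \<subseteq> E"
      have "x \<notin> E"
      proof
        assume "x \<in> E"
        hence "(x, d) \<in> r \<or> (d, x) \<in> r" using E d by (auto simp: is_chain_def)
        moreover have "d \<in> W" "d \<noteq> x" using d maximal_chain_subset[OF D] by auto
        ultimately show False using True x unfolding minimals_def by blast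
      qed
      hence "is_chain (W - {x}) r E" using E(1) by (auto simp: is_chain_def)
      thus "E = D" using maximal_chain_eq[OF D] E(2) by blast
    qed
    thus ?thesis using True by blast
  next
    case False
    hence dN: "d \<in> new_minimals W x" using dm by (simp add: new_minimals_def)
    have xd: "(x, d) \<in> r" using new_minimalsD[OF dN] by blast
    have "is_maximal_chain W r (insert x D)"
    proof (rule is_maximal_chainI)
      show "is_chain W r (insert x D)"
        by (rule is_chain_insert[OF chDW WV xW]) (use d xd po_trans in blast)
      fix E assume E: "is_chain W r E" "insert x D \<subseteq> E"
      have "is_chain (W - {x}) r (E - {x})"
        using E(1) by (auto simp: is_chain_def)
      moreover have "D \<subseteq> E - {x}" using E(2) maximal_chain_subset[OF D] by blast
      ultimately have "E - {x} = D" by (rule maximal_chain_eq[OF D])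
      thus "E = insert x D" using E(2) by blast
    qed
    thus ?thesis using dN by blast
  qed
qed

text \<open>When an element \<open>x\<close> of \<open>X\<close> is deleted, the new minimal elements take over its role.\<close>
definition residual :: "'a set \<Rightarrow> 'a set \<Rightarrow> 'a \<Rightarrow> 'a set" where
  "residual W X x = (X - {x}) \<union> (if x \<in> X then new_minimals W x else {})"

definition chain_dominated :: "'a set \<Rightarrow> 'a set \<Rightarrow> 'a set \<Rightarrow> bool" where
  "chain_dominated W A B \<longleftrightarrow> (\<forall>C. is_maximal_chain W r C \<and> C \<inter> A \<noteq> {} \<longrightarrow> C \<inter> B \<noteq> {})"

text \<open>The chain \<open>C\<close> meets \<open>B\<close> more often than the antichain \<open>A\<close>: it misses \<open>A\<close> but meets \<open>B\<close>,
  or it meets \<open>B\<close> twice.\<close>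
definition excess_on :: "'a set \<Rightarrow> 'a set \<Rightarrow> 'a set \<Rightarrow> bool" where
  "excess_on C A B \<longleftrightarrow> (C \<inter> A = {} \<and> C \<inter> B \<noteq> {}) \<or> (\<exists>b1\<in>C \<inter> B. \<exists>b2\<in>C \<inter> B. b1 \<noteq> b2)"

definition chain_excess :: "'a set \<Rightarrow> 'a set \<Rightarrow> 'a set \<Rightarrow> bool" where
  "chain_excess W A B \<longleftrightarrow> (\<exists>C. is_maximal_chain W r C \<and> excess_on C A B)"

lemma excess_on_mono:
  "excess_on C A B \<Longrightarrow> C \<inter> A' \<subseteq> C \<inter> A \<Longrightarrow> C \<inter> B \<subseteq> C \<inter> B' \<Longrightarrow> excess_on C A' B'"
  unfolding excess_on_def by blast

text \<open>The residual of an antichain is an antichain: the new minimal elements are pairwise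
  incomparable, and since they lie above \<open>x \<in> A\<close> they are comparable to no other element of \<open>A\<close>.\<close>
lemma antichain_residual:
  assumes A: "is_antichain W r A" and x: "x \<in> minimals W r"
  shows "is_antichain (W - {x}) r (residual W A x)"
  unfolding is_antichain_def
proof (intro conjI ballI impI notI)
  show "residual W A x \<subseteq> W - {x}"
    using A new_minimalsD by (auto simp: residual_def is_antichain_def)
  fix a b assume a: "a \<in> residual W A x" and b: "b \<in> residual W A x" and ab: "a \<noteq> b" "(a, b) \<in> r"
  have aW: "a \<in> W - {x}"
    using a A new_minimalsD by (auto simp: residual_def is_antichain_def split: if_splits)
  show False
  proof (cases "b \<in> new_minimals W x")
    case True
    thus False using new_minimalsD[OF True] aW ab by (auto simp: minimals_def)
  next
    case False
    hence bA: "b \<in> A - {x}" using b by (auto simp: residual_def split: if_splits)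
    show False
    proof (cases "a \<in> A")
      case False
      hence "x \<in> A" "(x, a) \<in> r" using a new_minimalsD by (auto simp: residual_def split: if_splits)
      moreover have "(x, b) \<in> r" using calculation(2) ab(2) by (rule po_trans)
      ultimately show False using bA A by (auto simp: is_antichain_def)
    qed (use bA A ab in \<open>auto simp: is_antichain_def\<close>)
  qed
qed

lemma dominated_residual:
  assumes WV: "W \<subseteq> V" and x: "x \<in> minimals W r" and dom: "chain_dominated W A B"
  shows "chain_dominated (W - {x}) (residual W A x) (residual W B x)"
  unfolding chain_dominated_def
proof (intro allI impI, elim conjE)
  fix D assume D: "is_maximal_chain (W - {x}) r D" and DA: "D \<inter> residual W A x \<noteq> {}"
  have DW: "D \<subseteq> W - {x}" using D by (rule maximal_chain_subset)
  have "finite D" using DW finite_subposet[OF WV] by (auto intro: finite_subset)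
  then obtain d where d: "d \<in> D" "\<forall>y\<in>D. (d, y) \<in> r"
    using chain_has_least[OF _ _ maximal_chain_chain[OF D]] DA by blast
  obtain a where a: "a \<in> D" "a \<in> residual W A x" using DA by blast
  from maximal_chain_lift[OF WV x D d] show "D \<inter> residual W B x \<noteq> {}"
  proof (elim disjE conjE)
    assume dM: "d \<in> minimals W r" and DM: "is_maximal_chain W r D"
    have "a \<notin> new_minimals W x"
    proof
      assume "a \<in> new_minimals W x"
      hence "a \<in> minimals (W - {x}) r" "a \<notin> minimals W r" by (auto simp: new_minimals_def)
      moreover have "d = a" using calculation(1) d a DW by (auto simp: minimals_def)
      ultimately show False using dM by simp
    qed
    hence "D \<inter> A \<noteq> {}" using a by (auto simp: residual_def split: if_splits)
    then obtain b where "b \<in> D" "b \<in> B" using dom DM unfolding chain_dominated_def by blast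
    thus ?thesis using DW by (auto simp: residual_def)
  next
    assume dN: "d \<in> new_minimals W x" and DM: "is_maximal_chain W r (insert x D)"
    have "insert x D \<inter> A \<noteq> {}" using a by (auto simp: residual_def split: if_splits)
    then obtain b where b: "b \<in> insert x D" "b \<in> B" using dom DM unfolding chain_dominated_def by blast
    hence "(if b = x then d else b) \<in> D \<inter> residual W B x" using d dN by (auto simp: residual_def)
    thus ?thesis by blast
  qed
qed

lemma excess_residual_other:
  assumes C: "is_maximal_chain W r C" and ex: "excess_on C A B"
    and c: "c \<in> C" "\<forall>y\<in>C. (c, y) \<in> r" "c \<in> minimals W r"
    and x: "x \<in> minimals W r" "x \<noteq> c"
  shows "chain_excess (W - {x}) (residual W A x) (residual W B x)"
proof -
  have CW: "C \<subseteq> W" using C by (rule maximal_chain_subset)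
  have xC: "x \<notin> C" using c x CW unfolding minimals_def by blast
  have no_new: "C \<inter> new_minimals W x = {}"
  proof (rule ccontr)
    assume "C \<inter> new_minimals W x \<noteq> {}"
    then obtain n where n: "n \<in> C" "n \<in> minimals (W - {x}) r" "n \<notin> minimals W r"
      by (auto simp: new_minimals_def)
    hence "c = n" using c CW xC unfolding minimals_def by blast
    thus False using n c by simp
  qed
  have "excess_on C (residual W A x) (residual W B x)"
    by (rule excess_on_mono[OF ex]) (use xC no_new in \<open>auto simp: residual_def\<close>)
  thus ?thesis using maximal_chain_delete_outside[OF C xC] by (auto simp: chain_excess_def)
qed

lemma excess_residual_bottom:
  assumes WV: "W \<subseteq> V" and ne: "W - {c} \<noteq> {}" and M: "minimals W r = {c}"
    and C: "is_maximal_chain W r C" and cC: "c \<in> C" and ex: "excess_on C A B"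
    and no_new: "c \<in> B \<Longrightarrow> new_minimals W c \<inter> B = {}"
  shows "chain_excess (W - {c}) (residual W A c) (residual W B c)"
proof -
  have C': "is_maximal_chain (W - {c}) r (C - {c})"
    by (rule maximal_chain_delete_bottom[OF WV M C cC])
  obtain c' where c': "c' \<in> C - {c}" "c' \<in> minimals (W - {c}) r"
    using maximal_chain_least[OF _ ne C'] WV by blast
  have new: "c' \<in> new_minimals W c" using c' M by (auto simp: new_minimals_def)
  have B': "(C - {c}) \<inter> B \<subseteq> residual W B c" and c'B: "c \<in> B \<Longrightarrow> c' \<in> residual W B c"
    using new by (auto simp: residual_def)
  from ex consider (miss) "C \<inter> A = {}" "C \<inter> B \<noteq> {}"
    | (twice) b1 b2 where "b1 \<in> C \<inter> B" "b2 \<in> C \<inter> B" "b1 \<noteq> b2"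
    unfolding excess_on_def by blast
  hence "excess_on (C - {c}) (residual W A c) (residual W B c)"
  proof cases
    case miss
    hence "residual W A c = A - {c}" using cC by (auto simp: residual_def)
    moreover have "(C - {c}) \<inter> residual W B c \<noteq> {}"
      using miss B' c'B c' by (cases "c \<in> B") auto
    ultimately show ?thesis using miss by (auto simp: excess_on_def)
  next
    case twice
    then obtain b b' where b: "b \<in> (C - {c}) \<inter> B" "b' \<in> C \<inter> B" "b \<noteq> b'"
      by (metis Diff_iff Int_iff singletonD)
    have "b \<in> (C - {c}) \<inter> residual W B c" using b B' by blast
    moreover have "b' \<in> (C - {c}) \<inter> residual W B c \<and> b' \<noteq> b
        \<or> c' \<in> (C - {c}) \<inter> residual W B c \<and> c' \<noteq> b"
    proof (cases "b' = c")
      case True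
      hence "c' \<notin> B" using no_new new b by blast
      thus ?thesis using True b c' c'B by auto
    qed (use b B' in blast)
    ultimately show ?thesis unfolding excess_on_def by blast
  qed
  thus ?thesis using C' by (auto simp: chain_excess_def)
qed

lemma excess_residual:
  assumes WV: "W \<subseteq> V" and two: "2 \<le> card W" and ex: "chain_excess W A B"
  shows "\<exists>x\<in>minimals W r. chain_excess (W - {x}) (residual W A x) (residual W B x)
                        \<or> (x \<in> B \<and> new_minimals W x \<inter> B \<noteq> {})"
proof -
  obtain C where C: "is_maximal_chain W r C" and exC: "excess_on C A B"
    using ex by (auto simp: chain_excess_def)
  have ne: "W - {w} \<noteq> {}" for w
  proof
    assume "W - {w} = {}"
    hence "card W \<le> card {w}" by (intro card_mono) auto
    thus False using two by simp
  qed
  obtain c where c: "c \<in> C" "\<forall>y\<in>C. (c, y) \<in> r" "c \<in> minimals W r"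
    using maximal_chain_least[OF WV _ C] ne by blast
  consider "c \<in> B \<and> new_minimals W c \<inter> B \<noteq> {}" | x where "x \<in> minimals W r" "x \<noteq> c"
    | "minimals W r = {c}" "c \<in> B \<Longrightarrow> new_minimals W c \<inter> B = {}"
    using c by blast
  thus ?thesis
  proof cases
    case 2 thus ?thesis using excess_residual_other[OF C exC c] by blast
  next
    case 3 thus ?thesis using excess_residual_bottom[OF WV ne _ C c(1) exC] c by blast
  qed (use c in blast)
qed

lemma residual_subset: "X \<subseteq> W \<Longrightarrow> residual W X x \<subseteq> W - {x}"
  using new_minimalsD by (auto simp: residual_def)

text \<open>For an antichain, the deleted element and its new minimal elements are disjoint
  contributions, so the sum over the residual splits exactly.\<close>
lemma del_sum_residual_antichain:
  assumes WV: "W \<subseteq> V" and A: "is_antichain W r A"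
  shows "del_sum (W - {m}) (residual W A m) = del_sum_at W A m"
proof (cases "m \<in> A")
  case True
  have "(A - {m}) \<inter> new_minimals W m = {}"
    using A True new_minimalsD by (fastforce simp: is_antichain_def)
  moreover have "finite (A - {m})"
    using A finite_subposet[OF WV] by (auto simp: is_antichain_def intro: finite_subset)
  ultimately show ?thesis
    using True finite_new_minimals[OF WV]
    by (simp add: del_sum_at_def del_sum_def residual_def sum.union_disjoint)
qed (simp add: residual_def del_sum_at_def)

text \<open>For an arbitrary set \<open>B\<close>, the new minimal elements may already lie in \<open>B\<close>; each such
  overlap is counted once too few by the residual, and contributes at least \<open>1\<close>.\<close>
lemma del_sum_residual_le:
  assumes WV: "W \<subseteq> V" and BW: "B \<subseteq> W"
  shows "del_sum (W - {m}) (residual W B m) + (if m \<in> B \<and> new_minimals W m \<inter> B \<noteq> {} then 1 else 0)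
       \<le> del_sum_at W B m"
proof (cases "m \<in> B")
  case True
  let ?N = "new_minimals W m"
  have fin: "finite (B - {m})" "finite ?N"
    using BW finite_subposet[OF WV] finite_new_minimals[OF WV] by (auto intro: finite_subset)
  have split: "del_sum (W - {m}) ((B - {m}) \<union> ?N) + del_sum (W - {m}) ((B - {m}) \<inter> ?N)
      = del_sum (W - {m}) (B - {m}) + del_sum (W - {m}) ?N"
    unfolding del_sum_def by (rule sum.union_inter[OF fin])
  have "(if ?N \<inter> B \<noteq> {} then 1 else 0) \<le> del_sum (W - {m}) ((B - {m}) \<inter> ?N)"
  proof (cases "?N \<inter> B = {}")
    case False
    then obtain y where y: "y \<in> (B - {m}) \<inter> ?N" using new_minimalsD by blast
    have "1 \<le> num_linext (W - {m} - {y}) r" using WV by (intro num_linext_pos) blast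
    also have "\<dots> \<le> del_sum (W - {m}) ((B - {m}) \<inter> ?N)"
      unfolding del_sum_def using y fin by (intro member_le_sum) auto
    finally show ?thesis using False by simp
  qed simp
  thus ?thesis using True split by (simp add: residual_def del_sum_at_def)
qed (simp add: residual_def del_sum_at_def)

lemma del_sum_dominated_small:
  assumes WV: "W \<subseteq> V" and small: "card W \<le> 1" and AW: "A \<subseteq> W" and BW: "B \<subseteq> W"
    and dom: "chain_dominated W A B"
  shows "del_sum W A + (if chain_excess W A B then 1 else 0) \<le> del_sum W B"
proof -
  have "W = {} \<or> (\<exists>w. W = {w})"
    using small finite_subposet[OF WV] by (auto simp: le_Suc_eq card_1_singleton_iff)
  thus ?thesis
  proof (elim disjE exE)
    assume "W = {}"
    thus ?thesis using AW BW by (simp add: chain_excess_def excess_on_def del_sum_def)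
  next
    fix w assume W: "W = {w}"
    have sum_w: "del_sum W X = (if w \<in> X then 1 else 0)" if "X \<subseteq> W" for X
    proof -
      have "X = {} \<or> X = {w}" using that W by auto
      thus ?thesis using W by (auto simp: del_sum_def num_linext_empty)
    qed
    have "is_chain W r {w}" using W WV po_refl by (simp add: is_chain_def)
    hence "is_maximal_chain W r {w}"
      by (rule is_maximal_chainI) (use W in \<open>auto simp: is_chain_def\<close>)
    hence "w \<in> A \<Longrightarrow> w \<in> B" using dom by (auto simp: chain_dominated_def)
    moreover have "w \<in> B \<and> w \<notin> A" if ex: "chain_excess W A B"
    proof -
      obtain C where C: "is_maximal_chain W r C" "excess_on C A B"
        using ex by (auto simp: chain_excess_def)
      have "C \<subseteq> {w}" using maximal_chain_subset[OF C(1)] W by simp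
      thus ?thesis using C(2) unfolding excess_on_def by blast
    qed
    ultimately show ?thesis using sum_w[OF AW] sum_w[OF BW] by auto
  qed
qed

lemma del_sum_dominated:
  "W \<subseteq> V \<Longrightarrow> is_antichain W r A \<Longrightarrow> B \<subseteq> W \<Longrightarrow> chain_dominated W A B \<Longrightarrow>
   del_sum W A + (if chain_excess W A B then 1 else 0) \<le> del_sum W B"
proof (induction "card W" arbitrary: W A B rule: less_induct)
  case less
  note WV = less.prems(1) and A = less.prems(2) and BW = less.prems(3) and dom = less.prems(4)
  show ?case
  proof (cases "card W \<le> 1")
    case True
    thus ?thesis using less.prems by (intro del_sum_dominated_small) (auto simp: is_antichain_def)
  next
    case False
    hence two: "2 \<le> card W" by simp
    have AW: "A \<subseteq> W" using A by (simp add: is_antichain_def)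
    define bonus :: "'a \<Rightarrow> nat" where
      "bonus x = (if chain_excess (W - {x}) (residual W A x) (residual W B x)
                     \<or> (x \<in> B \<and> new_minimals W x \<inter> B \<noteq> {}) then 1 else 0)" for x
    have step: "del_sum_at W A x + bonus x \<le> del_sum_at W B x" if x: "x \<in> minimals W r" for x
    proof -
      have xW: "x \<in> W" using x by (simp add: minimals_def)
      have "del_sum (W - {x}) (residual W A x)
          + (if chain_excess (W - {x}) (residual W A x) (residual W B x) then 1 else 0)
          \<le> del_sum (W - {x}) (residual W B x)"
      proof (rule less.hyps)
        show "card (W - {x}) < card W" using finite_subposet[OF WV] xW by (rule card_Diff1_less)
        show "is_antichain (W - {x}) r (residual W A x)" using A x by (rule antichain_residual)
        show "chain_dominated (W - {x}) (residual W A x) (residual W B x)"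
          using WV x dom by (rule dominated_residual)
      qed (use WV residual_subset[OF BW] in auto)
      thus ?thesis
        using del_sum_residual_antichain[OF WV A, of x] del_sum_residual_le[OF WV BW, of x]
        unfolding bonus_def by (auto split: if_splits)
    qed
    have "del_sum W A + (\<Sum>x\<in>minimals W r. bonus x)
        = (\<Sum>x\<in>minimals W r. del_sum_at W A x + bonus x)"
      using del_sum_decomp[OF WV two AW] by (simp add: sum.distrib)
    also have "\<dots> \<le> (\<Sum>x\<in>minimals W r. del_sum_at W B x)"
      by (rule sum_mono) (rule step)
    also have "\<dots> = del_sum W B" using del_sum_decomp[OF WV two BW] by simp
    finally have main: "del_sum W A + (\<Sum>x\<in>minimals W r. bonus x) \<le> del_sum W B" .
    have "(if chain_excess W A B then 1 else 0) \<le> (\<Sum>x\<in>minimals W r. bonus x)"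
    proof (cases "chain_excess W A B")
      case True
      then obtain x where "x \<in> minimals W r"
        "chain_excess (W - {x}) (residual W A x) (residual W B x) \<or> (x \<in> B \<and> new_minimals W x \<inter> B \<noteq> {})"
        using excess_residual[OF WV two] by blast
      hence "x \<in> minimals W r" "bonus x = 1" by (simp_all add: bonus_def)
      moreover have "finite (minimals W r)"
        using finite_subposet[OF WV] by (simp add: minimals_def)
      ultimately show ?thesis using True member_le_sum[of x "minimals W r" bonus] by simp
    qed simp
    thus ?thesis using main by linarith
  qed
qed

lemma antichain_minimals: "is_antichain V r (minimals V r)"
  by (auto simp: is_antichain_def minimals_def dest: po_carrier)

text \<open>First inequality of the theorem, strict when the antichain is not a cutset
  (compare with the set of minimal elements, which every maximal chain meets).\<close>
lemma antichain_bound: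
  assumes A: "is_antichain V r A"
  shows "del_sum V A + (if is_cutset V r A then 0 else 1) \<le> num_linext V r"
proof (cases "V = {}")
  case True
  thus ?thesis using A by (simp add: is_antichain_def del_sum_def num_linext_empty)
next
  case False
  have dom: "chain_dominated V A (minimals V r)"
    using maximal_chain_least[OF subset_refl False] by (auto simp: chain_dominated_def)
  have "chain_excess V A (minimals V r)" if nc: "\<not> is_cutset V r A"
  proof -
    obtain C where C: "is_maximal_chain V r C" "A \<inter> C = {}"
      using nc A by (auto simp: is_cutset_def is_antichain_def)
    obtain c where "c \<in> C" "c \<in> minimals V r"
      using maximal_chain_least[OF subset_refl False C(1)] by blast
    thus ?thesis using C by (auto simp: chain_excess_def excess_on_def)
  qed
  hence "del_sum V A + (if is_cutset V r A then 0 else 1) \<le> del_sum V (minimals V r)"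
    using del_sum_dominated[OF subset_refl A _ dom] by (auto simp: minimals_def split: if_splits)
  thus ?thesis using num_linext_rec[OF finite_carrier False] by (simp add: del_sum_def)
qed

text \<open>Second inequality of the theorem, strict when the cutset is not an antichain
  (then some maximal chain meets it twice).\<close>
lemma cutset_bound:
  assumes S: "is_cutset V r S"
  shows "num_linext V r + (if is_antichain V r S then 0 else 1) \<le> del_sum V S"
proof -
  have SV: "S \<subseteq> V" using S by (simp add: is_cutset_def)
  have "is_maximal_chain {} r {}" by (auto intro: is_maximal_chainI simp: is_chain_def)
  hence ne: "V \<noteq> {}" using S by (auto simp: is_cutset_def)
  have dom: "chain_dominated V (minimals V r) S"
    using S by (auto simp: chain_dominated_def is_cutset_def)
  have "chain_excess V (minimals V r) S" if na: "\<not> is_antichain V r S"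
  proof -
    obtain x y where xy: "x \<in> S" "y \<in> S" "x \<noteq> y" "(x, y) \<in> r"
      using na SV by (auto simp: is_antichain_def)
    have "is_chain V r {x, y}" using xy SV po_refl by (auto simp: is_chain_def)
    then obtain C where "is_maximal_chain V r C" "{x, y} \<subseteq> C"
      using chain_extends_maximal[OF subset_refl] by blast
    thus ?thesis using xy by (auto simp: chain_excess_def excess_on_def)
  qed
  hence "del_sum V (minimals V r) + (if is_antichain V r S then 0 else 1) \<le> del_sum V S"
    using del_sum_dominated[OF subset_refl antichain_minimals SV dom] by (auto split: if_splits)
  thus ?thesis using num_linext_rec[OF finite_carrier ne] by (simp add: del_sum_def)
qed

end

theorem corollary3p10:
  fixes V :: "'a set" and r :: "'a rel"
  assumes "finite V" and "partial_order_on V r"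
  shows "(\<forall>A. is_antichain V r A \<longrightarrow>
            num_linext V r \<ge> (\<Sum>v\<in>A. num_linext (V - {v}) (del_pt r V v)))
       \<and> (\<forall>S. is_cutset V r S \<longrightarrow>
            num_linext V r \<le> (\<Sum>v\<in>S. num_linext (V - {v}) (del_pt r V v)))
       \<and> (\<forall>I. (is_cutset V r I \<or> is_antichain V r I) \<longrightarrow>
            (num_linext V r = (\<Sum>v\<in>I. num_linext (V - {v}) (del_pt r V v))
              \<longleftrightarrow> is_cutset V r I \<and> is_antichain V r I))"
proof -
  interpret finite_poset V r using assms by unfold_locales
  have sum_eq: "(\<Sum>v\<in>X. num_linext (V - {v}) (del_pt r V v)) = del_sum V X" for X
    unfolding del_sum_def del_pt_def num_linext_def linext_Restr ..
  show ?thesis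
    unfolding sum_eq using antichain_bound cutset_bound by (fastforce split: if_splits)
qed

end
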